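(* For every integer $k\ge 1$, the number of unlabeled connected $k$-vertex graphs with at most $k-1+\frac{k}{\ln k}$ edges is less than $100^k$.
   Context: Graphs are finite and simple; unlabeled means counted up to isomorphism. For $k=1$ the quantity $k/\ln k$ is interpreted as imposing no constraint beyond $k-1=0$ edges (the only graph is the single vertex). *)

theory Defs
  imports Complex_Main
begin

definition simple_graphs :: "nat \<Rightarrow> nat set set set" where
  "simple_graphs k = {E. \<forall>e\<in>E. e \<subseteq> {0..<k} \<and> card e = 2}"

definition adj :: "nat set set \<Rightarrow> (nat \<times> nat) set" where
  "adj E = {(u, v). {u, v} \<in> E}"

definition graph_connected :: "nat \<Rightarrow> nat set set \<Rightarrow> bool" where
  "graph_connected k E \<longleftrightarrow> (\<forall>u\<in>{0..<k}. \<forall>v\<in>{0..<k}. (u, v) \<in> (adj E)\<^sup>*)"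

definition graph_iso :: "nat \<Rightarrow> nat set set \<Rightarrow> nat set set \<Rightarrow> bool" where
  "graph_iso k E E' \<longleftrightarrow>
     (\<exists>f. bij_betw f {0..<k} {0..<k} \<and> E' = (\<lambda>e. f ` e) ` E)"

text \<open>Connected labeled graphs on k vertices with at most k - 1 + k / ln k edges.
  Note: for k = 1, ln 1 = 0 and division by zero is 0, so the bound is 0 edges.\<close>
definition sparse_connected :: "nat \<Rightarrow> nat set set set" where
  "sparse_connected k = {E \<in> simple_graphs k. graph_connected k E \<and>
       real (card E) \<le> real k - 1 + real k / ln (real k)}"

definition num_unlabeled_sparse_connected :: "nat \<Rightarrow> nat" where
  "num_unlabeled_sparse_connected k =
     card (sparse_connected k //
           {(E, E'). E \<in> sparse_connected k \<and> E' \<in> sparse_connected k \<and> graph_iso k E E'})"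

end

theory Submission
  imports Defs "HOL-Library.FuncSet"
begin

text \<open>Relabel a connected graph so that its vertices appear in breadth-first order,
  each vertex being attached to the first earlier vertex it is adjacent to. The
  resulting spanning tree is described by a parent map p with p i < i that is
  nondecreasing; p \<mapsto> {p i + i | i < k} encodes such maps injectively by subsets of
  {0..<2k}, so there are at most 4^k of them. A sparse graph consists of such a tree
  and at most s = \<lfloor>k / ln k\<rfloor> further edges, which can be chosen in at most
  (k^2)^s = exp (2 s ln k) \<le> e^(2k) \<le> 9^k ways. This gives at most 36^k
  isomorphism classes.\<close>

lemma rtrancl_leaves_set:
  assumes "(a, b) \<in> R\<^sup>*" "a \<in> S" "b \<notin> S"
  obtains x y where "(x, y) \<in> R" "x \<in> S" "y \<notin> S"
  using assms by (induction rule: rtrancl_induct) auto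

lemma card_bounded_subsets_le:
  assumes "finite A"
  shows "card {X. X \<subseteq> A \<and> card X \<le> s} \<le> (card A + 1) ^ s"
proof (induction s)
  case 0
  have "{X. X \<subseteq> A \<and> card X \<le> 0} = {{}}"
    using assms by (auto dest: finite_subset)
  then show ?case by simp
next
  case (Suc s)
  let ?S = "\<lambda>s. {X. X \<subseteq> A \<and> card X \<le> s}"
  have fin: "finite (?S s)"
    using assms by (auto intro: finite_subset[of _ "Pow A"])
  have "?S (Suc s) \<subseteq> ?S s \<union> (\<Union>a\<in>A. insert a ` ?S s)"
  proof
    fix X assume X: "X \<in> ?S (Suc s)"
    show "X \<in> ?S s \<union> (\<Union>a\<in>A. insert a ` ?S s)"
    proof (cases "X = {}")
      case False
      then obtain a where "a \<in> X" by blast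
      with X have "X = insert a (X - {a})" "X - {a} \<in> ?S s" "a \<in> A"
        using assms by (auto dest: finite_subset)
      then show ?thesis by blast
    qed simp
  qed
  then have "card (?S (Suc s)) \<le> card (?S s \<union> (\<Union>a\<in>A. insert a ` ?S s))"
    using assms fin by (intro card_mono) auto
  also have "\<dots> \<le> card (?S s) + (\<Sum>a\<in>A. card (insert a ` ?S s))"
    by (intro order.trans[OF card_Un_le] add_left_mono card_UN_le assms)
  also have "\<dots> \<le> card (?S s) + card A * card (?S s)"
    by (intro add_left_mono sum_bounded_above[of A _ "card (?S s)", simplified] card_image_le fin)
  also have "\<dots> \<le> (card A + 1) ^ Suc s"
    using Suc.IH by (simp add: add_mono)
  finally show ?case .
qed

lemma card_mono_maps_le:
  "card {p \<in> {0..<n} \<rightarrow>\<^sub>E {0..<m}. mono_on {0..<n} p} \<le> 2 ^ (n + m)"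
proof -
  let ?P = "{p \<in> {0..<n} \<rightarrow>\<^sub>E {0..<m}. mono_on {0..<n} p}"
  let ?code = "\<lambda>p. (\<lambda>i. p i + i) ` {0..<n}"
  have sorted: "sorted_wrt (<) (map (\<lambda>i. p i + i) [0..<n])" if "p \<in> ?P" for p
    using that by (auto simp: sorted_wrt_iff_nth_less mono_on_def intro: add_le_less_mono)
  have "inj_on ?code ?P"
  proof (rule inj_onI)
    fix p q assume p: "p \<in> ?P" and q: "q \<in> ?P" and "?code p = ?code q"
    then have "map (\<lambda>i. p i + i) [0..<n] = map (\<lambda>i. q i + i) [0..<n]"
      using sorted[OF p] sorted[OF q]
      by (intro sorted_distinct_set_unique) (auto simp: strict_sorted_iff)
    then show "p = q"
      using p q by (intro PiE_ext[of _ "{0..<n}" "\<lambda>_. {0..<m}"]) (auto simp: map_eq_conv)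
  qed
  moreover have "?code ` ?P \<subseteq> Pow {0..<n + m}"
    by (fastforce simp: PiE_def Pi_def)
  ultimately have "card ?P \<le> card (Pow {0..<n + m})"
    by (intro card_inj_on_le) auto
  then show ?thesis
    by (simp add: card_Pow)
qed

definition vertex_pairs :: "nat \<Rightarrow> nat set set" where
  "vertex_pairs k = {e. e \<subseteq> {0..<k} \<and> card e = 2}"

lemma simple_graphs_eq_Pow: "simple_graphs k = Pow (vertex_pairs k)"
  by (auto simp: simple_graphs_def vertex_pairs_def)

lemma finite_vertex_pairs: "finite (vertex_pairs k)"
  unfolding vertex_pairs_def by (rule finite_subset[of _ "Pow {0..<k}"]) auto

lemma card_vertex_pairs: "card (vertex_pairs k) = k choose 2"
  unfolding vertex_pairs_def using n_subsets[of "{0..<k}" 2] by simp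

lemma card_vertex_pairs_less_square:
  assumes "k \<ge> 1"
  shows "card (vertex_pairs k) + 1 \<le> k ^ 2"
proof -
  have "card (vertex_pairs k) \<le> k * (k - 1)"
    by (simp add: card_vertex_pairs choose_two)
  also have "\<dots> < k ^ 2"
    using assms by (simp add: power2_eq_square)
  finally show ?thesis
    by simp
qed

definition relabel :: "(nat \<Rightarrow> nat) \<Rightarrow> nat set set \<Rightarrow> nat set set" where
  "relabel f E = (\<lambda>e. f ` e) ` E"

lemma graph_iso_iff_relabel:
  "graph_iso k E E' \<longleftrightarrow> (\<exists>f. bij_betw f {0..<k} {0..<k} \<and> E' = relabel f E)"
  by (simp add: graph_iso_def relabel_def)

lemma relabel_comp: "relabel g (relabel f E) = relabel (g \<circ> f) E"
  by (simp add: relabel_def image_image image_comp)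

lemma relabel_cong:
  assumes "E \<in> simple_graphs k" "\<And>v. v < k \<Longrightarrow> f v = g v"
  shows "relabel f E = relabel g E"
proof -
  have "f ` e = g ` e" if "e \<in> E" for e
  proof -
    have "e \<subseteq> {0..<k}"
      using assms(1) that by (simp add: simple_graphs_def)
    with assms(2) show ?thesis
      by (intro image_cong) auto
  qed
  then show ?thesis
    unfolding relabel_def by (rule image_cong[OF refl])
qed

lemma relabel_simple_graph:
  assumes f: "bij_betw f {0..<k} {0..<k}" and E: "E \<in> simple_graphs k"
  shows "relabel f E \<in> simple_graphs k"
proof -
  have "f ` e \<subseteq> {0..<k} \<and> card (f ` e) = 2" if "e \<in> E" for e
  proof -
    have e: "e \<subseteq> {0..<k}" "card e = 2"
      using E that by (auto simp: simple_graphs_def)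
    then have "inj_on f e"
      using f inj_on_subset by (auto simp: bij_betw_def)
    then show ?thesis
      using e f by (auto simp: card_image bij_betw_def)
  qed
  then show ?thesis
    by (auto simp: simple_graphs_def relabel_def)
qed

lemma card_relabel:
  assumes "inj_on f {0..<k}" "E \<in> simple_graphs k"
  shows "card (relabel f E) = card E"
proof -
  have "\<Union> E \<subseteq> {0..<k}"
    using assms(2) by (auto simp: simple_graphs_def)
  then have "inj_on (\<lambda>e. f ` e) E"
    using inj_on_image[OF inj_on_subset[OF assms(1)]] by blast
  then show ?thesis
    by (simp add: relabel_def card_image)
qed

lemma rtrancl_adj_relabel:
  assumes "(u, v) \<in> (adj E)\<^sup>*"
  shows "(f u, f v) \<in> (adj (relabel f E))\<^sup>*"
  using assms
proof (induction rule: rtrancl_induct)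
  case (step y z)
  from step.hyps(2) have "{y, z} \<in> E"
    by (simp add: adj_def)
  then have "f ` {y, z} \<in> relabel f E"
    unfolding relabel_def by (rule imageI)
  then have "(f y, f z) \<in> adj (relabel f E)"
    by (simp add: adj_def)
  with step.IH show ?case by (rule rtrancl_into_rtrancl)
qed simp

lemma graph_connected_relabel:
  assumes f: "bij_betw f {0..<k} {0..<k}" and E: "graph_connected k E"
  shows "graph_connected k (relabel f E)"
  unfolding graph_connected_def
proof (intro ballI)
  fix u v assume "u \<in> {0..<k}" "v \<in> {0..<k}"
  then obtain u' v' where "u' \<in> {0..<k}" "v' \<in> {0..<k}" "u = f u'" "v = f v'"
    using f unfolding bij_betw_def by (metis imageE)
  with E show "(u, v) \<in> (adj (relabel f E))\<^sup>*"
    by (simp add: graph_connected_def rtrancl_adj_relabel)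
qed

lemma sparse_connected_relabel:
  assumes f: "bij_betw f {0..<k} {0..<k}" and E: "E \<in> sparse_connected k"
  shows "relabel f E \<in> sparse_connected k"
  using E relabel_simple_graph[OF f] graph_connected_relabel[OF f]
    card_relabel[OF bij_betw_imp_inj_on[OF f]]
  by (simp add: sparse_connected_def)

lemma graph_iso_sym:
  assumes "E \<in> simple_graphs k" "graph_iso k E E'"
  shows "graph_iso k E' E"
proof -
  obtain f where f: "bij_betw f {0..<k} {0..<k}" and E': "E' = relabel f E"
    using assms(2) by (auto simp: graph_iso_iff_relabel)
  have "relabel (inv_into {0..<k} f) E' = relabel (inv_into {0..<k} f \<circ> f) E"
    by (simp only: E' relabel_comp)
  also have "\<dots> = relabel id E"
    using f by (intro relabel_cong[OF assms(1)]) (simp add: bij_betw_def)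
  also have "\<dots> = E"
    by (simp add: relabel_def)
  finally have "E = relabel (inv_into {0..<k} f) E'" ..
  then show ?thesis
    using bij_betw_inv_into[OF f] by (auto simp: graph_iso_iff_relabel)
qed

lemma equiv_graph_iso:
  assumes "S \<subseteq> simple_graphs k"
  shows "equiv S {(E, E'). E \<in> S \<and> E' \<in> S \<and> graph_iso k E E'}"
proof (rule equivI)
  show "{(E, E'). E \<in> S \<and> E' \<in> S \<and> graph_iso k E E'} \<subseteq> S \<times> S"
    by auto
  have "graph_iso k E E" for E
    by (auto simp: graph_iso_iff_relabel relabel_def intro: exI[of _ id])
  then show "refl_on S {(E, E'). E \<in> S \<and> E' \<in> S \<and> graph_iso k E E'}"
    by (auto simp: refl_on_def)
  show "sym {(E, E'). E \<in> S \<and> E' \<in> S \<and> graph_iso k E E'}"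
    using assms graph_iso_sym by (auto simp: sym_def)
  show "trans {(E, E'). E \<in> S \<and> E' \<in> S \<and> graph_iso k E E'}"
  proof (rule transI, clarsimp)
    fix E E' E'' assume "graph_iso k E E'" "graph_iso k E' E''"
    then obtain f g where "bij_betw f {0..<k} {0..<k}" "bij_betw g {0..<k} {0..<k}"
      and "E'' = relabel (g \<circ> f) E"
      by (auto simp: graph_iso_iff_relabel relabel_comp)
    then show "graph_iso k E E''"
      unfolding graph_iso_iff_relabel by (blast intro: bij_betw_trans)
  qed
qed

lemma card_quotient_le_card_representatives:
  assumes "equiv A R" "finite T" "\<And>x. x \<in> A \<Longrightarrow> \<exists>y\<in>T. (x, y) \<in> R"
  shows "card (A // R) \<le> card T"
proof -
  have "A // R \<subseteq> (\<lambda>y. R `` {y}) ` T"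
  proof
    fix C assume "C \<in> A // R"
    then obtain x where "x \<in> A" "C = R `` {x}" by (auto elim: quotientE)
    with assms show "C \<in> (\<lambda>y. R `` {y}) ` T"
      by (metis equiv_class_eq image_eqI)
  qed
  then show ?thesis
    using assms(2) by (meson card_image_le card_mono finite_imageI order_trans)
qed

text \<open>The last clause (no unvisited vertex is adjacent to a vertex listed before the
  parent of the last vertex) is what keeps p nondecreasing when the prefix is extended.\<close>

definition bfs_prefix :: "nat \<Rightarrow> nat set set \<Rightarrow> nat list \<Rightarrow> (nat \<Rightarrow> nat) \<Rightarrow> bool" where
  "bfs_prefix k E xs p \<longleftrightarrow> distinct xs \<and> set xs \<subseteq> {0..<k} \<and> p 0 = 0
     \<and> mono_on {0..<length xs} p
     \<and> (\<forall>i\<in>{1..<length xs}. p i < i \<and> {xs ! i, xs ! p i} \<in> E)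
     \<and> (\<forall>u\<in>{0..<k} - set xs. \<forall>j<length xs. {u, xs ! j} \<in> E \<longrightarrow> p (length xs - 1) \<le> j)"

lemma bfs_prefix_start: "0 < k \<Longrightarrow> bfs_prefix k E [0] (\<lambda>_. 0)"
  by (simp add: bfs_prefix_def mono_on_def)

lemma graph_connected_frontier_edge:
  assumes E: "E \<in> simple_graphs k" and con: "graph_connected k E"
    and xs: "xs \<noteq> []" "set xs \<subseteq> {0..<k}" "set xs \<noteq> {0..<k}"
  shows "\<exists>j<length xs. \<exists>u\<in>{0..<k} - set xs. {u, xs ! j} \<in> E"
proof -
  obtain w where w: "w \<in> {0..<k}" "w \<notin> set xs"
    using xs by blast
  have "(hd xs, w) \<in> (adj E)\<^sup>*"
    using con w xs by (simp add: graph_connected_def subset_iff)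
  then obtain x y where "(x, y) \<in> adj E" "x \<in> set xs" "y \<notin> set xs"
    using w xs by (elim rtrancl_leaves_set) auto
  moreover from this obtain j where "j < length xs" "xs ! j = x"
    by (auto simp: in_set_conv_nth)
  moreover from calculation have "y \<in> {0..<k}"
    using E by (auto simp: adj_def simple_graphs_def)
  ultimately show ?thesis
    by (auto simp: adj_def insert_commute intro!: exI[of _ j] bexI[of _ y])
qed

lemma bfs_prefix_extend:
  assumes inv: "bfs_prefix k E xs p" and E: "E \<in> simple_graphs k" and con: "graph_connected k E"
    and xs: "xs \<noteq> []" "length xs < k"
  shows "\<exists>u q. bfs_prefix k E (xs @ [u]) q"
proof -
  define n where "n = length xs"
  define Q where "Q j \<longleftrightarrow> j < n \<and> (\<exists>u\<in>{0..<k} - set xs. {u, xs ! j} \<in> E)" for j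
  define m where "m = (LEAST j. Q j)"
  have "set xs \<noteq> {0..<k}"
    using inv xs by (metis bfs_prefix_def distinct_card card_atLeastLessThan diff_zero less_irrefl)
  then have "\<exists>j. Q j"
    using graph_connected_frontier_edge[OF E con] inv xs by (auto simp: Q_def n_def bfs_prefix_def)
  then have "Q m" and m_least: "\<And>j. Q j \<Longrightarrow> m \<le> j"
    unfolding m_def by (auto intro: LeastI_ex Least_le)
  then obtain u where m: "m < n" and u: "u \<in> {0..<k} - set xs" "{u, xs ! m} \<in> E"
    by (auto simp: Q_def)
  define q where "q = p(n := m)"
  have n: "0 < n" "length (xs @ [u]) = Suc n"
    using xs by (simp_all add: n_def)
  have nth: "(xs @ [u]) ! i = (if i < n then xs ! i else u)" if "i \<le> n" for i
    using that by (simp add: nth_append n_def)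
  have last_parent: "p (n - 1) \<le> m"
    using inv u m by (auto simp: bfs_prefix_def n_def)
  have "p i \<le> m" if "i < n" for i
  proof -
    have "mono_on {0..<n} p"
      using inv by (simp add: bfs_prefix_def n_def)
    then have "p i \<le> p (n - 1)"
      using that by (auto intro: mono_onD)
    with last_parent show ?thesis by simp
  qed
  then have "mono_on {0..<Suc n} q"
    using inv by (auto simp: mono_on_def q_def bfs_prefix_def n_def)
  moreover have "q i < i \<and> {(xs @ [u]) ! i, (xs @ [u]) ! q i} \<in> E" if "i \<in> {1..<Suc n}" for i
  proof (cases "i = n")
    case False
    with that have "i < n" "p i < i" "{xs ! i, xs ! p i} \<in> E"
      using inv by (auto simp: bfs_prefix_def n_def)
    then show ?thesis
      by (simp add: q_def nth_append n_def)
  qed (use m u nth in \<open>simp add: q_def insert_commute\<close>)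
  moreover have "m \<le> j"
    if "v \<in> {0..<k} - set (xs @ [u])" "j < Suc n" "{v, (xs @ [u]) ! j} \<in> E" for v j
  proof (cases "j = n")
    case False
    with that have "Q j"
      using nth[of j] by (auto simp: Q_def)
    then show ?thesis
      by (rule m_least)
  qed (use m in simp)
  ultimately have "bfs_prefix k E (xs @ [u]) q"
    using inv u n by (auto simp: bfs_prefix_def q_def)
  then show ?thesis by blast
qed

lemma bfs_prefix_exists:
  assumes E: "E \<in> simple_graphs k" and con: "graph_connected k E"
  shows "1 \<le> n \<Longrightarrow> n \<le> k \<Longrightarrow> \<exists>xs p. bfs_prefix k E xs p \<and> length xs = n"
proof (induction n)
  case (Suc n)
  show ?case
  proof (cases "n = 0")
    case True
    with Suc.prems have "bfs_prefix k E [0] (\<lambda>_. 0) \<and> length [0] = Suc n"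
      using bfs_prefix_start by simp
    then show ?thesis by blast
  next
    case False
    with Suc obtain xs p where xs: "bfs_prefix k E xs p" "length xs = n"
      by auto
    moreover from xs False Suc.prems obtain u q where "bfs_prefix k E (xs @ [u]) q"
      using bfs_prefix_extend[OF _ E con] by fastforce
    ultimately show ?thesis
      by (metis length_append_singleton)
  qed
qed simp

definition bfs_parent_maps :: "nat \<Rightarrow> (nat \<Rightarrow> nat) set" where
  "bfs_parent_maps k =
     {p \<in> {0..<k} \<rightarrow>\<^sub>E {0..<k}. mono_on {0..<k} p \<and> (\<forall>i\<in>{1..<k}. p i < i)}"

definition parent_tree :: "nat \<Rightarrow> (nat \<Rightarrow> nat) \<Rightarrow> nat set set" where
  "parent_tree k p = (\<lambda>i. {i, p i}) ` {1..<k}"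

lemma card_bfs_parent_maps: "card (bfs_parent_maps k) \<le> 4 ^ k"
proof -
  have "card (bfs_parent_maps k) \<le> card {p \<in> {0..<k} \<rightarrow>\<^sub>E {0..<k}. mono_on {0..<k} p}"
    by (intro card_mono) (auto simp: bfs_parent_maps_def finite_PiE)
  also have "\<dots> \<le> 2 ^ (k + k)"
    by (rule card_mono_maps_le)
  finally show ?thesis
    by (simp add: power_add flip: power_mult_distrib)
qed

lemma card_parent_tree:
  assumes "\<forall>i\<in>{1..<k}. p i < i"
  shows "card (parent_tree k p) = k - 1"
proof -
  have "inj_on (\<lambda>i. {i, p i}) {1..<k}"
    using assms by (intro inj_onI) (metis doubleton_eq_iff less_asym)
  then show ?thesis
    by (simp add: parent_tree_def card_image)
qed

lemma connected_relabel_contains_parent_tree: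
  assumes E: "E \<in> simple_graphs k" and con: "graph_connected k E" and k: "0 < k"
  obtains f p where "bij_betw f {0..<k} {0..<k}" "p \<in> bfs_parent_maps k"
    "parent_tree k p \<subseteq> relabel f E"
proof -
  obtain xs p where bfs: "bfs_prefix k E xs p" and len: "length xs = k"
    using bfs_prefix_exists[OF E con, of k] k by auto
  have "set xs = {0..<k}"
    using bfs len by (auto simp: bfs_prefix_def card_subset_eq distinct_card)
  then have nth: "bij_betw ((!) xs) {0..<k} {0..<k}"
    using bfs len by (intro bij_betw_nth) (auto simp: bfs_prefix_def)
  define f where "f = inv_into {0..<k} ((!) xs)"
  have f_nth: "f (xs ! i) = i" if "i < k" for i
    using nth that by (simp add: f_def bij_betw_def)
  have "restrict p {0..<k} \<in> bfs_parent_maps k"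
  proof -
    have "p 0 = 0" "\<forall>i\<in>{1..<k}. p i < i"
      using bfs len by (auto simp: bfs_prefix_def)
    then have "p i < k" if "i < k" for i
      using k that by (cases "i = 0") (auto dest: bspec[of _ _ i])
    then show ?thesis
      using bfs len by (auto simp: bfs_parent_maps_def bfs_prefix_def mono_on_def)
  qed
  moreover have "parent_tree k (restrict p {0..<k}) \<subseteq> relabel f E"
  proof
    fix e assume "e \<in> parent_tree k (restrict p {0..<k})"
    then obtain i where i: "i \<in> {1..<k}" and e: "e = {i, p i}"
      by (auto simp: parent_tree_def)
    then have "p i < i" "{xs ! i, xs ! p i} \<in> E"
      using bfs len by (auto simp: bfs_prefix_def)
    moreover have "f ` {xs ! i, xs ! p i} = e"
      using i f_nth e \<open>p i < i\<close> by simp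
    ultimately show "e \<in> relabel f E"
      unfolding relabel_def by blast
  qed
  ultimately show thesis
    using that bij_betw_inv_into[OF nth] by (simp add: f_def)
qed

definition extended_trees :: "nat \<Rightarrow> nat \<Rightarrow> nat set set set" where
  "extended_trees k s = (\<lambda>(p, X). parent_tree k p \<union> X) `
     (bfs_parent_maps k \<times> {X. X \<subseteq> vertex_pairs k \<and> card X \<le> s})"

lemma card_extended_trees:
  "card (extended_trees k s) \<le> 4 ^ k * (card (vertex_pairs k) + 1) ^ s"
  "finite (extended_trees k s)"
proof -
  have fin: "finite (bfs_parent_maps k)" "finite {X. X \<subseteq> vertex_pairs k \<and> card X \<le> s}"
    using finite_vertex_pairs by (auto simp: bfs_parent_maps_def finite_PiE)
  then show "finite (extended_trees k s)"
    by (simp add: extended_trees_def)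
  have "card (extended_trees k s)
      \<le> card (bfs_parent_maps k) * card {X. X \<subseteq> vertex_pairs k \<and> card X \<le> s}"
    unfolding extended_trees_def card_cartesian_product[symmetric] by (rule card_image_le) (simp add: fin)
  also have "\<dots> \<le> 4 ^ k * (card (vertex_pairs k) + 1) ^ s"
    by (intro mult_mono card_bfs_parent_maps card_bounded_subsets_le finite_vertex_pairs) auto
  finally show "card (extended_trees k s) \<le> 4 ^ k * (card (vertex_pairs k) + 1) ^ s" .
qed

lemma sparse_connected_iso_extended_tree:
  assumes E: "E \<in> sparse_connected k" and k: "0 < k"
  shows "\<exists>E'\<in>extended_trees k (nat \<lfloor>k / ln k\<rfloor>). E' \<in> sparse_connected k \<and> graph_iso k E E'"
proof -
  have "E \<in> simple_graphs k" "graph_connected k E"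
    using E by (auto simp: sparse_connected_def)
  then obtain f p where f: "bij_betw f {0..<k} {0..<k}" and p: "p \<in> bfs_parent_maps k"
    and tree: "parent_tree k p \<subseteq> relabel f E"
    using connected_relabel_contains_parent_tree k by blast
  define X where "X = relabel f E - parent_tree k p"
  have E': "relabel f E \<in> sparse_connected k"
    using sparse_connected_relabel[OF f E] .
  then have "X \<subseteq> vertex_pairs k" and fin: "finite (relabel f E)"
    using finite_vertex_pairs by (auto simp: X_def sparse_connected_def simple_graphs_eq_Pow
        intro: finite_subset)
  have "card (parent_tree k p) = k - 1"
    using p by (simp add: bfs_parent_maps_def card_parent_tree)
  moreover have "card X = card (relabel f E) - card (parent_tree k p)"
    unfolding X_def by (rule card_Diff_subset[OF finite_subset[OF tree fin] tree])
  moreover have "card (parent_tree k p) \<le> card (relabel f E)"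
    by (rule card_mono[OF fin tree])
  ultimately have "card X = card (relabel f E) - (k - 1)" "k - 1 \<le> card (relabel f E)"
    by simp_all
  then have "real (card X) = real (card (relabel f E)) - (real k - 1)"
    using k by (simp add: of_nat_diff)
  then have "real (card X) \<le> k / ln k"
    using E' by (simp add: sparse_connected_def)
  then have "card X \<le> nat \<lfloor>k / ln k\<rfloor>"
    by (simp add: le_nat_floor)
  with \<open>X \<subseteq> vertex_pairs k\<close> p have "relabel f E \<in> extended_trees k (nat \<lfloor>k / ln k\<rfloor>)"
    using tree by (auto simp: extended_trees_def X_def image_iff intro!: bexI[of _ "(p, X)"])
  moreover have "graph_iso k E (relabel f E)"
    using f by (auto simp: graph_iso_iff_relabel)
  ultimately show ?thesis
    using E' by blast
qed

lemma square_power_le_nine_power: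
  fixes k s :: nat
  assumes "real s \<le> k / ln k"
  shows "(k ^ 2) ^ s \<le> 9 ^ k"
proof (cases "k \<le> 1")
  case True
  then have "(k ^ 2) ^ s \<le> 1"
    by (intro power_le_one) (auto simp: le_Suc_eq)
  then show ?thesis
    using one_le_power[of "9::nat" k] by linarith
next
  case False
  then have ln: "ln k > 0" by simp
  have "real ((k ^ 2) ^ s) = exp (ln k) ^ (2 * s)"
    using False by (simp add: power_mult)
  also have "\<dots> = exp (real (2 * s) * ln k)"
    by (rule exp_of_nat_mult[symmetric])
  also have "\<dots> \<le> exp (real (2 * k))"
  proof -
    have "real s * ln k \<le> k"
      using assms ln by (simp add: pos_le_divide_eq)
    then show ?thesis
      by simp
  qed
  also have "\<dots> = exp 1 ^ (2 * k)"
    by (metis exp_of_nat_mult mult.right_neutral)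
  also have "\<dots> \<le> 3 ^ (2 * k)"
    by (intro power_mono exp_le) simp
  also have "\<dots> = 9 ^ k"
    by (simp add: power_mult)
  finally show ?thesis
    by (metis of_nat_le_iff of_nat_numeral of_nat_power)
qed

theorem mainTheorem6:
  fixes k :: nat
  assumes "k \<ge> 1"
  shows "num_unlabeled_sparse_connected k < 100 ^ k"
proof -
  let ?R = "{(E, E'). E \<in> sparse_connected k \<and> E' \<in> sparse_connected k \<and> graph_iso k E E'}"
  let ?s = "nat \<lfloor>k / ln k\<rfloor>"
  have "equiv (sparse_connected k) ?R"
    by (rule equiv_graph_iso) (auto simp: sparse_connected_def)
  then have "card (sparse_connected k // ?R) \<le> card (extended_trees k ?s)"
    using card_extended_trees(2) sparse_connected_iso_extended_tree assms
    by (intro card_quotient_le_card_representatives) auto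
  also have "\<dots> \<le> 4 ^ k * (k ^ 2) ^ ?s"
    using card_extended_trees(1) card_vertex_pairs_less_square[OF assms]
    by (meson le_trans mult_le_mono2 power_mono zero_le)
  also have "\<dots> \<le> 4 ^ k * 9 ^ k"
    using assms by (intro mult_le_mono2 square_power_le_nine_power) simp
  also have "\<dots> = 36 ^ k"
    by (simp flip: power_mult_distrib)
  also have "\<dots> < 100 ^ k"
    using assms by (intro power_strict_mono) auto
  finally show ?thesis
    by (simp add: num_unlabeled_sparse_connected_def)
qed

end
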